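(* Let $T>0$, $\gamma\in(0,T]$, $\mathcal{T}=[0,T]$, and let $\mathcal{D}$ be the set of Lebesgue measurable functions $\delta:\mathcal{T}\to[-1,1]$ with $\int_{\mathcal{T}}|\delta(t)|\,\mathrm{d}t\le\gamma$. Let $\mathcal{D}^+_\downarrow\subseteq\mathcal{D}$ be the set of those $\delta\in\mathcal{D}$ that are nonnegative, nonincreasing and left-continuous. Let $\eta^+,\eta^-\in(0,1]$ and, for $x^b\in\mathbb{R}$, $x^r\ge 0$, $y_0\in\mathbb{R}$, $\delta\in\mathcal{D}$, $t\in\mathcal{T}$, let $$y(x^b,x^r,\delta,y_0,t)=y_0+\int_0^t\Big(\eta^+\big[x^b+\delta(s)x^r\big]^+-\tfrac{1}{\eta^-}\big[x^b+\delta(s)x^r\big]^-\Big)\,\mathrm{d}s .$$ Then for any $x^b\in\mathbb{R}$, $y_0\in\mathbb{R}$ and any $x^r\ge 0$, $$\max_{\delta\in\mathcal{D},\,t\in\mathcal{T}} y(x^b,x^r,\delta,y_0,t)=\max_{\delta\in\mathcal{D}^+_\downarrow,\,t\in\mathcal{T}} y(x^b,x^r,\delta,y_0,t).$$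
   Context: $[a]^+=\max\{a,0\}$ and $[a]^-=\max\{-a,0\}$. Here $x^b$ is the base charging power of a battery, $x^r$ the reserve capacity offered for frequency regulation, $\delta$ a normalized frequency-deviation trajectory, $\eta^\pm$ charging/discharging efficiencies, and $y$ the state-of-charge. *)

theory Defs
  imports "HOL-Analysis.Analysis"
begin

definition pospart :: "real \<Rightarrow> real" where "pospart a = max a 0"
definition negpart :: "real \<Rightarrow> real" where "negpart a = max (- a) 0"

text \<open>The set D of admissible frequency deviation trajectories on [0,T].
  Functions are total on the reals; only their values on [0,T] matter.\<close>
definition devset :: "real \<Rightarrow> real \<Rightarrow> (real \<Rightarrow> real) set" where
  "devset T \<gamma> = {\<delta>. set_borel_measurable lebesgue {0..T} \<delta>
      \<and> (\<forall>t\<in>{0..T}. \<delta> t \<in> {-1..1})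
      \<and> (LINT s:{0..T}|lebesgue. \<bar>\<delta> s\<bar>) \<le> \<gamma>}"

definition devset_dec :: "real \<Rightarrow> real \<Rightarrow> (real \<Rightarrow> real) set" where
  "devset_dec T \<gamma> = {\<delta> \<in> devset T \<gamma>.
      (\<forall>t\<in>{0..T}. 0 \<le> \<delta> t)
      \<and> (\<forall>s\<in>{0..T}. \<forall>t\<in>{0..T}. s \<le> t \<longrightarrow> \<delta> t \<le> \<delta> s)
      \<and> (\<forall>t\<in>{0<..T}. (\<delta> \<longlongrightarrow> \<delta> t) (at_left t))}"

definition soc :: "real \<Rightarrow> real \<Rightarrow> real \<Rightarrow> real \<Rightarrow> (real \<Rightarrow> real) \<Rightarrow> real \<Rightarrow> real \<Rightarrow> real" where
  "soc \<eta>p \<eta>m xb xr \<delta> y0 t = y0 + (LINT s:{0..t}|lebesgue.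
      \<eta>p * pospart (xb + \<delta> s * xr) - (1 / \<eta>m) * negpart (xb + \<delta> s * xr))"

end

theory Submission
  imports Defs
begin

text \<open>Because \<open>\<eta>\<^sup>+ \<le> 1 \<le> 1/\<eta>\<^sup>-\<close>, the net charging rate \<open>\<eta>\<^sup>+[u]\<^sup>+ - [u]\<^sup>-/\<eta>\<^sup>-\<close> is the
  concave, nondecreasing, positively homogeneous function \<open>min (\<eta>\<^sup>+ u) (u/\<eta>\<^sup>-)\<close>.
  Jensen's inequality for this minimum of two linear maps bounds the state of charge at time \<open>t\<close>
  by the rate applied to the total power \<open>\<integral>\<^sub>0\<^sup>t x\<^sup>b + \<delta> x\<^sup>r\<close>, which is at most
  \<open>t x\<^sup>b + x\<^sup>r min t \<gamma>\<close>. For the time \<open>t\<^sub>0\<close> maximising this bound, the step trajectory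
  with value \<open>min t\<^sub>0 \<gamma> / t\<^sub>0\<close> on \<open>[0, t\<^sub>0]\<close> and \<open>0\<close> afterwards is nonnegative,
  nonincreasing and left-continuous, and attains the bound.\<close>

definition charge_rate :: "real \<Rightarrow> real \<Rightarrow> real \<Rightarrow> real" where
  "charge_rate \<eta>p \<eta>m u = min (\<eta>p * u) (u / \<eta>m)"

lemma pospart_negpart_eq_charge_rate:
  fixes \<eta>p \<eta>m u :: real
  assumes "0 < \<eta>p" "\<eta>p \<le> 1" "0 < \<eta>m" "\<eta>m \<le> 1"
  shows "\<eta>p * pospart u - 1 / \<eta>m * negpart u = charge_rate \<eta>p \<eta>m u"
proof (cases "u \<ge> 0")
  case True
  have "\<eta>p * u \<le> u" using True assms by (simp add: mult_left_le_one_le)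
  moreover have "u \<le> u / \<eta>m" using True assms by (simp add: le_divide_eq mult_left_le)
  ultimately show ?thesis using True by (simp add: pospart_def negpart_def charge_rate_def)
next
  case False
  have "u \<le> \<eta>p * u" using False assms by (simp add: mult_le_cancel_right1)
  moreover have "u / \<eta>m \<le> u" using False assms by (simp add: divide_le_eq mult_le_cancel_left1)
  ultimately have "charge_rate \<eta>p \<eta>m u = u / \<eta>m" unfolding charge_rate_def by linarith
  then show ?thesis using False by (simp add: pospart_def negpart_def)
qed

lemma charge_rate_mono:
  assumes "0 < \<eta>p" "0 < \<eta>m" "u \<le> v"
  shows "charge_rate \<eta>p \<eta>m u \<le> charge_rate \<eta>p \<eta>m v"
  unfolding charge_rate_def using assms by (intro min.mono mult_left_mono divide_right_mono) auto

lemma charge_rate_scale: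
  assumes "0 \<le> c"
  shows "c * charge_rate \<eta>p \<eta>m u = charge_rate \<eta>p \<eta>m (c * u)"
  unfolding charge_rate_def using assms by (simp add: min_mult_distrib_left mult.left_commute)

lemma soc_eq_integral_charge_rate:
  assumes "0 < \<eta>p" "\<eta>p \<le> 1" "0 < \<eta>m" "\<eta>m \<le> 1"
  shows "soc \<eta>p \<eta>m xb xr \<delta> y0 t = y0 + (LINT s:{0..t}|lebesgue. charge_rate \<eta>p \<eta>m (xb + \<delta> s * xr))"
  unfolding soc_def pospart_negpart_eq_charge_rate[OF assms] ..

lemma set_integrable_min:
  fixes f g :: "'a \<Rightarrow> real"
  assumes "set_integrable M A f" "set_integrable M A g"
  shows "set_integrable M A (\<lambda>x. min (f x) (g x))"
proof -
  have "(\<lambda>x. indicator A x *\<^sub>R min (f x) (g x))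
      = (\<lambda>x. min (indicator A x *\<^sub>R f x) (indicator A x *\<^sub>R g x))"
    by (auto split: split_indicator)
  then show ?thesis using assms unfolding set_integrable_def by (simp add: integrable_min)
qed

lemma set_integral_min_le:
  fixes f g :: "'a \<Rightarrow> real"
  assumes "set_integrable M A f" "set_integrable M A g"
  shows "(LINT x:A|M. min (f x) (g x)) \<le> min (LINT x:A|M. f x) (LINT x:A|M. g x)"
  using set_integrable_min[OF assms] assms by (auto intro: set_integral_mono)

lemma set_integral_mono_set:
  fixes f :: "'a \<Rightarrow> real"
  assumes "set_integrable M B f" "A \<in> sets M" "A \<subseteq> B" "\<And>x. x \<in> B \<Longrightarrow> 0 \<le> f x"
  shows "(LINT x:A|M. f x) \<le> (LINT x:B|M. f x)"
proof -
  have "set_integrable M A f" using assms(1-3) by (rule set_integrable_subset)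
  then show ?thesis
    using assms unfolding set_lebesgue_integral_def set_integrable_def
    by (intro integral_mono) (auto split: split_indicator)
qed

lemma set_integrable_bounded_Icc:
  fixes g :: "real \<Rightarrow> real"
  assumes "set_borel_measurable lebesgue {a..b} g" "\<And>x. x \<in> {a..b} \<Longrightarrow> \<bar>g x\<bar> \<le> B"
  shows "set_integrable lebesgue {a..b} g"
  using assms
  by (intro set_integrable_bound[OF absolutely_integrable_on_const[where c = B, OF lmeasurable_interval(1)]])
     (auto intro!: AE_I2 order_trans[OF _ abs_ge_self])

lemma devset_set_integrable:
  assumes "\<delta> \<in> devset T \<gamma>" "t \<le> T"
  shows "set_integrable lebesgue {0..t} \<delta>"
proof -
  have "set_integrable lebesgue {0..T} \<delta>"
    using assms(1) unfolding devset_def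
    by (intro set_integrable_bounded_Icc[of _ _ _ 1]) (auto simp: abs_le_iff)
  then show ?thesis using assms(2) by (auto intro: set_integrable_subset)
qed

lemma devset_integral_le:
  assumes "\<delta> \<in> devset T \<gamma>" "t \<in> {0..T}"
  shows "(LINT s:{0..t}|lebesgue. \<delta> s) \<le> min t \<gamma>"
proof -
  have int_t: "set_integrable lebesgue {0..t} \<delta>" and int_T: "set_integrable lebesgue {0..T} \<delta>"
    using assms by (auto intro: devset_set_integrable)
  have "(LINT s:{0..t}|lebesgue. \<delta> s) \<le> (LINT s:{0..t}|lebesgue. 1)"
    using assms absolutely_integrable_on_const[OF lmeasurable_interval(1)] unfolding devset_def
    by (intro set_integral_mono[OF int_t]) auto
  moreover have "(LINT s:{0..t}|lebesgue. \<delta> s) \<le> (LINT s:{0..t}|lebesgue. \<bar>\<delta> s\<bar>)"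
    using int_t by (intro set_integral_mono set_integrable_abs) auto
  moreover have "(LINT s:{0..t}|lebesgue. \<bar>\<delta> s\<bar>) \<le> (LINT s:{0..T}|lebesgue. \<bar>\<delta> s\<bar>)"
    using assms(2) by (intro set_integral_mono_set set_integrable_abs[OF int_T]) auto
  ultimately show ?thesis
    using assms unfolding devset_def by (auto simp: set_integral_const)
qed

lemma soc_le_charge_rate:
  assumes "0 < \<eta>p" "\<eta>p \<le> 1" "0 < \<eta>m" "\<eta>m \<le> 1" "xr \<ge> 0"
    and \<delta>: "\<delta> \<in> devset T \<gamma>" and t: "t \<in> {0..T}"
  shows "soc \<eta>p \<eta>m xb xr \<delta> y0 t \<le> y0 + charge_rate \<eta>p \<eta>m (t * xb + xr * min t \<gamma>)"
proof -
  have int_\<delta>: "set_integrable lebesgue {0..t} \<delta>" using \<delta> t by (auto intro: devset_set_integrable)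
  then have int_u: "set_integrable lebesgue {0..t} (\<lambda>s. xb + \<delta> s * xr)"
    by (intro set_integral_add(1) absolutely_integrable_on_const[OF lmeasurable_interval(1)]
        set_integrable_mult_left)
  have total: "(LINT s:{0..t}|lebesgue. xb + \<delta> s * xr) = t * xb + xr * (LINT s:{0..t}|lebesgue. \<delta> s)"
    using int_\<delta> t
    by (simp add: set_integral_add(2)[OF absolutely_integrable_on_const[OF lmeasurable_interval(1)]]
        set_integrable_mult_left set_integral_const mult.commute)
  have "(LINT s:{0..t}|lebesgue. charge_rate \<eta>p \<eta>m (xb + \<delta> s * xr))
      \<le> charge_rate \<eta>p \<eta>m (LINT s:{0..t}|lebesgue. xb + \<delta> s * xr)"
    using set_integral_min_le[OF set_integrable_mult_right set_integrable_divide, OF int_u int_u]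
    unfolding charge_rate_def by simp
  also have "\<dots> \<le> charge_rate \<eta>p \<eta>m (t * xb + xr * min t \<gamma>)"
    unfolding total using assms devset_integral_le[OF \<delta> t]
    by (intro charge_rate_mono add_left_mono mult_left_mono) auto
  finally show ?thesis unfolding soc_eq_integral_charge_rate[OF assms(1-4)] by simp
qed

text \<open>For \<open>t\<^sub>0 = 0\<close> this is the zero trajectory, since \<open>0 / 0 = 0\<close>.\<close>
definition step_deviation :: "real \<Rightarrow> real \<Rightarrow> real \<Rightarrow> real" where
  "step_deviation \<gamma> t0 s = min t0 \<gamma> / t0 * indicator {..t0} s"

lemma step_height_bounds:
  fixes \<gamma> t0 :: real
  assumes "0 < \<gamma>" "0 \<le> t0"
  shows "0 \<le> min t0 \<gamma> / t0" "min t0 \<gamma> / t0 \<le> 1" "t0 * (min t0 \<gamma> / t0) = min t0 \<gamma>"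
  using assms by (cases "t0 = 0"; simp add: divide_le_eq)+

lemma step_deviation_left_continuous:
  "(step_deviation \<gamma> t0 \<longlongrightarrow> step_deviation \<gamma> t0 t) (at_left t)"
proof -
  have "eventually (\<lambda>s. s \<in> {(if t0 < t then t0 else t - 1)<..<t}) (at_left t)"
    by (rule eventually_at_left_real) auto
  then have "eventually (\<lambda>s. step_deviation \<gamma> t0 s = step_deviation \<gamma> t0 t) (at_left t)"
    by eventually_elim (auto simp: step_deviation_def split: if_splits split_indicator)
  then show ?thesis by (rule tendsto_eventually)
qed

lemma step_deviation_mem_devset_dec:
  assumes "0 < \<gamma>" "t0 \<in> {0..T}"
  shows "step_deviation \<gamma> t0 \<in> devset_dec T \<gamma>"
proof -
  let ?c = "min t0 \<gamma> / t0"
  have c: "0 \<le> ?c" "?c \<le> 1" "t0 * ?c = min t0 \<gamma>" using assms step_height_bounds by auto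
  have "set_borel_measurable lebesgue {0..T} (step_deviation \<gamma> t0)"
    unfolding set_borel_measurable_def step_deviation_def
    by (intro borel_measurable_scaleR borel_measurable_times borel_measurable_const borel_measurable_indicator) auto
  moreover have "(LINT s:{0..T}|lebesgue. \<bar>step_deviation \<gamma> t0 s\<bar>) = (LINT s:{0..t0}|lebesgue. ?c)"
    using assms c unfolding set_lebesgue_integral_def step_deviation_def
    by (intro Bochner_Integration.integral_cong) (auto split: split_indicator)
  then have "(LINT s:{0..T}|lebesgue. \<bar>step_deviation \<gamma> t0 s\<bar>) \<le> \<gamma>"
    using assms c by (simp add: set_integral_const)
  moreover have "0 \<le> step_deviation \<gamma> t0 t" "step_deviation \<gamma> t0 t \<le> 1" for t
    using c by (auto simp: step_deviation_def split: split_indicator)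
  moreover have "step_deviation \<gamma> t0 t \<le> step_deviation \<gamma> t0 s" if "s \<le> t" for s t
    using c that by (auto simp: step_deviation_def split: split_indicator)
  ultimately show ?thesis
    using step_deviation_left_continuous unfolding devset_dec_def devset_def
    by (auto intro: order_trans[of "-1" 0])
qed

lemma soc_step_deviation:
  assumes "0 < \<eta>p" "\<eta>p \<le> 1" "0 < \<eta>m" "\<eta>m \<le> 1" "0 < \<gamma>" "0 \<le> t0"
  shows "soc \<eta>p \<eta>m xb xr (step_deviation \<gamma> t0) y0 t0
       = y0 + charge_rate \<eta>p \<eta>m (t0 * xb + xr * min t0 \<gamma>)"
proof -
  let ?c = "min t0 \<gamma> / t0"
  have "soc \<eta>p \<eta>m xb xr (step_deviation \<gamma> t0) y0 t0
      = y0 + (LINT s:{0..t0}|lebesgue. charge_rate \<eta>p \<eta>m (xb + ?c * xr))"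
    unfolding soc_eq_integral_charge_rate[OF assms(1-4)]
    by (intro arg_cong[where f = "(+) y0"] set_lebesgue_integral_cong) (auto simp: step_deviation_def)
  also have "\<dots> = y0 + charge_rate \<eta>p \<eta>m (t0 * (xb + ?c * xr))"
    using assms(6) by (simp add: set_integral_const charge_rate_scale)
  also have "t0 * (xb + ?c * xr) = t0 * xb + xr * min t0 \<gamma>"
    unfolding distrib_left mult.assoc[symmetric] step_height_bounds(3)[OF assms(5,6)] by simp
  finally show ?thesis .
qed

theorem lemma2:
  fixes T \<gamma> \<eta>p \<eta>m xb xr y0 :: real
  assumes "T > 0" and "0 < \<gamma>" and "\<gamma> \<le> T"
    and "0 < \<eta>p" and "\<eta>p \<le> 1" and "0 < \<eta>m" and "\<eta>m \<le> 1"
    and "xr \<ge> 0"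
  defines "S1 \<equiv> {soc \<eta>p \<eta>m xb xr \<delta> y0 t | \<delta> t. \<delta> \<in> devset T \<gamma> \<and> t \<in> {0..T}}"
    and "S2 \<equiv> {soc \<eta>p \<eta>m xb xr \<delta> y0 t | \<delta> t. \<delta> \<in> devset_dec T \<gamma> \<and> t \<in> {0..T}}"
  shows "\<exists>m. m \<in> S1 \<and> (\<forall>v\<in>S1. v \<le> m) \<and> m \<in> S2 \<and> (\<forall>v\<in>S2. v \<le> m)"
proof -
  define bound where "bound t = y0 + charge_rate \<eta>p \<eta>m (t * xb + xr * min t \<gamma>)" for t
  have "continuous_on {0..T} bound"
    unfolding bound_def charge_rate_def using assms(6) by (intro continuous_intros) auto
  then obtain t0 where t0: "t0 \<in> {0..T}" and max: "\<And>t. t \<in> {0..T} \<Longrightarrow> bound t \<le> bound t0"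
    using continuous_attains_sup[of "{0..T}" bound] assms(1) by auto
  have "soc \<eta>p \<eta>m xb xr (step_deviation \<gamma> t0) y0 t0 = bound t0"
    unfolding bound_def using t0 by (intro soc_step_deviation assms) auto
  then have "bound t0 \<in> S2"
    unfolding S2_def using step_deviation_mem_devset_dec[OF assms(2) t0] t0
    by (auto intro!: exI[of _ "step_deviation \<gamma> t0"] exI[of _ t0])
  moreover have "S2 \<subseteq> S1"
    unfolding S1_def S2_def devset_dec_def by blast
  moreover have "soc \<eta>p \<eta>m xb xr \<delta> y0 t \<le> bound t0" if "\<delta> \<in> devset T \<gamma>" "t \<in> {0..T}" for \<delta> t
    using soc_le_charge_rate[OF assms(4-8) that, of xb y0] max[OF that(2)]
    unfolding bound_def by linarith
  ultimately show ?thesis unfolding S1_def by blast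
qed

end
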